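(* Let $\{p_\eta:\eta>0\}$ be a minimal exponential family of densities $p_\eta(x)=h(x)e^{\eta T(x)-A(\eta)}$, with $(0,\infty)$ contained in the interior of the natural parameter space. Let $\eta_{\mathrm{test}}>0$ be a random variable, and let $Y$ be a random variable whose conditional distribution given $\eta_{\mathrm{test}}$ is $p_{\eta_{\mathrm{test}}}$. Assume $\mathbb{E}\,T(Y)$ exists and is finite, and $\mathbb{E}|\log h(Y)|<\infty$. Then $\eta^*=(A')^{-1}\big(\mathbb{E}\,A'(\eta_{\mathrm{test}})\big)$ is well defined (a unique $\eta^*>0$ with $A'(\eta^* )=\mathbb{E}A'(\eta_{\mathrm{test}})$ exists), and $\eta^*$ is the unique minimizer over $\eta>0$ of the expected logarithmic loss $\mathbb{E}\,\ell(p_\eta,p_{\eta_{\mathrm{test}}})=\mathbb{E}[-\log p_\eta(Y)]$.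
   Context: A single-parameter exponential family is minimal if $T$ is not almost everywhere constant. Logarithmic loss of forecast density $f$ at outcome $y$: $-\log f(y)$. *)

theory Defs
  imports "HOL-Probability.Probability"
begin

definition ef_A :: "'a measure \<Rightarrow> ('a \<Rightarrow> real) \<Rightarrow> ('a \<Rightarrow> real) \<Rightarrow> real \<Rightarrow> real" where
  "ef_A \<mu> h T \<eta> = ln (\<integral>x. h x * exp (\<eta> * T x) \<partial>\<mu>)"

definition ef_density :: "'a measure \<Rightarrow> ('a \<Rightarrow> real) \<Rightarrow> ('a \<Rightarrow> real) \<Rightarrow> real \<Rightarrow> 'a \<Rightarrow> real" where
  "ef_density \<mu> h T \<eta> x = h x * exp (\<eta> * T x - ef_A \<mu> h T \<eta>)"

definition natural_param_space :: "'a measure \<Rightarrow> ('a \<Rightarrow> real) \<Rightarrow> ('a \<Rightarrow> real) \<Rightarrow> real set" where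
  "natural_param_space \<mu> h T = {\<eta>. integrable \<mu> (\<lambda>x. h x * exp (\<eta> * T x))}"

definition minimal_ef :: "'a measure \<Rightarrow> ('a \<Rightarrow> real) \<Rightarrow> ('a \<Rightarrow> real) \<Rightarrow> bool" where
  "minimal_ef \<mu> h T \<longleftrightarrow> \<not> (\<exists>c. AE x in density \<mu> (\<lambda>x. ennreal (h x)). T x = c)"

definition log_loss :: "('a \<Rightarrow> real) \<Rightarrow> 'a \<Rightarrow> real" where
  "log_loss f y = - ln (f y)"

end

theory Submission
  imports Defs
begin

text \<open>The log-partition function A is differentiable with A'(\<eta>) the mean of T under p_\<eta>,
  and minimality makes it strictly convex, since exp u = 1 + u only for u = 0.
  Conditioning on \<eta>_test gives E T(Y) = E A'(\<eta>_test) =: c, so the expected log loss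
  of p_\<eta> is A(\<eta>) - c \<eta> up to a constant: a strictly convex function whose unique critical
  point is the unique solution of A'(\<eta>) = c. Such a solution exists by Darboux's theorem,
  because the strictly increasing A' takes values on both sides of its own mean c.\<close>

section \<open>Elementary real analysis\<close>

lemma exp_minus_one_minus_le:
  fixes u :: real
  shows "\<bar>exp u - 1 - u\<bar> \<le> u^2 * exp \<bar>u\<bar>"
proof (cases "u = 0")
  case False
  from Maclaurin_exp_lt[OF False, of 2] obtain t where t: "\<bar>t\<bar> < \<bar>u\<bar>"
    "exp u = (\<Sum>m<2. (u ^ m) / fact m) + (exp t / fact 2) * u ^ 2" by auto
  have eq: "exp u - 1 - u = exp t / 2 * u^2" using t(2) by (simp add: eval_nat_numeral)
  have "exp t / 2 \<le> exp \<bar>u\<bar>" using t(1) exp_gt_zero[of t] exp_less_cancel_iff[of t "\<bar>u\<bar>"] by linarith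
  from mult_right_mono[OF this zero_le_power2[of u]]
  show ?thesis unfolding eq by (simp add: mult.commute)
qed simp

lemma exp_eq_one_plus_iff: "exp u = 1 + u \<longleftrightarrow> u = (0::real)"
proof
  assume eq: "exp u = 1 + u"
  show "u = 0"
  proof (rule ccontr)
    assume "u \<noteq> 0"
    from Maclaurin_exp_lt[OF this, of 2] obtain t where
      "exp u = (\<Sum>m<2. (u ^ m) / fact m) + (exp t / fact 2) * u ^ 2" by auto
    then have "exp u = 1 + u + exp t / 2 * u^2" by (simp add: eval_nat_numeral)
    moreover have "exp t / 2 * u^2 > 0" using \<open>u \<noteq> 0\<close> by simp
    ultimately show False using eq by simp
  qed
qed simp

lemma exp_abs_le_exp_plus_exp_minus: "exp (d * \<bar>x\<bar>) \<le> exp (d * x) + exp (- d * x)" for d x :: real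
proof -
  have "0 < exp (d * x)" "0 < exp (- d * x)" by simp_all
  then show ?thesis by (cases "x \<ge> 0") (simp_all add: abs_of_nonneg abs_of_neg)
qed

lemma abs_mult_exp_le:
  fixes d t \<eta> :: real
  assumes d: "d > 0"
  shows "\<bar>t\<bar> * exp (\<eta> * t) \<le> (exp ((\<eta> + d) * t) + exp ((\<eta> - d) * t)) / d"
proof -
  have "d * \<bar>t\<bar> \<le> exp (d * \<bar>t\<bar>)" using exp_ge_add_one_self[of "d * \<bar>t\<bar>"] by linarith
  also have "\<dots> \<le> exp (d * t) + exp (- d * t)" by (rule exp_abs_le_exp_plus_exp_minus)
  finally have "\<bar>t\<bar> \<le> (exp (d * t) + exp (- d * t)) / d" using d by (simp add: field_simps)
  from mult_right_mono[OF this, of "exp (\<eta> * t)"]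
  show ?thesis by (simp add: exp_add[symmetric] field_simps)
qed

lemma exp_remainder_mult_exp_le:
  fixes d t \<eta> s :: real
  assumes d: "d > 0" and s: "\<bar>s\<bar> \<le> d"
  shows "exp (\<eta> * t) * \<bar>exp (s * t) - 1 - s * t\<bar>
    \<le> s^2 * ((2 / d^2) * (exp ((\<eta> + 2 * d) * t) + exp ((\<eta> - 2 * d) * t)))"
proof -
  have "\<bar>s * t\<bar> \<le> d * \<bar>t\<bar>" using s by (simp add: abs_mult mult_right_mono)
  then have exp_st: "exp \<bar>s * t\<bar> \<le> exp (d * \<bar>t\<bar>)" by simp
  have t_sq: "t^2 \<le> 2 * exp (d * \<bar>t\<bar>) / d^2"
  proof -
    have dt: "0 \<le> d * \<bar>t\<bar>" using d by simp
    have "(d * \<bar>t\<bar>)^2 / 2 \<le> exp (d * \<bar>t\<bar>)"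
      using exp_lower_Taylor_quadratic[OF dt] dt by linarith
    then show ?thesis using d by (simp add: power_mult_distrib field_simps)
  qed
  have "\<bar>exp (s * t) - 1 - s * t\<bar> \<le> (s * t)^2 * exp \<bar>s * t\<bar>" by (rule exp_minus_one_minus_le)
  also have "\<dots> \<le> s^2 * t^2 * exp (d * \<bar>t\<bar>)"
    using exp_st by (simp add: power_mult_distrib mult_left_mono)
  also have "\<dots> \<le> s^2 * (2 * exp (d * \<bar>t\<bar>) / d^2) * exp (d * \<bar>t\<bar>)"
    using t_sq by (intro mult_right_mono mult_left_mono) auto
  also have "\<dots> = s^2 * (2 / d^2) * exp ((2 * d) * \<bar>t\<bar>)"
    by (simp add: exp_add[symmetric] algebra_simps)
  also have "\<dots> \<le> s^2 * (2 / d^2) * (exp ((2 * d) * t) + exp (- (2 * d) * t))"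
    using exp_abs_le_exp_plus_exp_minus[of "2 * d" t] by (intro mult_left_mono) auto
  finally have "exp (\<eta> * t) * \<bar>exp (s * t) - 1 - s * t\<bar>
      \<le> exp (\<eta> * t) * (s^2 * (2 / d^2) * (exp ((2 * d) * t) + exp (- (2 * d) * t)))"
    by (rule mult_left_mono) simp
  also have "\<dots> = s^2 * ((2 / d^2) * (exp (\<eta> * t) * (exp ((2 * d) * t) + exp (- (2 * d) * t))))"
    by (simp only: mult.assoc mult.left_commute)
  moreover have "exp (\<eta> * t) * (exp ((2 * d) * t) + exp (- (2 * d) * t))
      = exp ((\<eta> + 2 * d) * t) + exp ((\<eta> - 2 * d) * t)"
    by (simp add: distrib_left exp_add[symmetric] algebra_simps)
  ultimately show ?thesis by (simp only:)
qed

lemma DERIV_of_quadratic_remainder: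
  fixes f :: "real \<Rightarrow> real"
  assumes d: "d > 0" and bound: "\<And>t. \<bar>t\<bar> \<le> d \<Longrightarrow> \<bar>f (x + t) - f x - t * D\<bar> \<le> C * t^2"
  shows "(f has_real_derivative D) (at x)"
  unfolding has_field_derivative_iff
proof (rule tendstoI)
  fix e :: real assume e: "e > 0"
  define r where "r = min d (e / (\<bar>C\<bar> + 1))"
  show "\<forall>\<^sub>F y in at x. dist ((f y - f x) / (y - x)) D < e"
    unfolding eventually_at
  proof (intro exI[of _ r] conjI ballI impI)
    show "r > 0" using d e by (simp add: r_def)
    fix y assume y: "y \<noteq> x \<and> dist y x < r"
    define t where "t = y - x"
    have t0: "t \<noteq> 0" and tr: "\<bar>t\<bar> < r" using y by (auto simp: t_def dist_real_def)
    have "\<bar>f (x + t) - f x - t * D\<bar> \<le> C * t^2" using bound tr by (simp add: r_def)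
    also have "\<dots> \<le> \<bar>C\<bar> * t^2" by (rule mult_right_mono) simp_all
    finally have "\<bar>f (x + t) - f x - t * D\<bar> \<le> \<bar>C\<bar> * t^2" .
    moreover have "(f y - f x) / (y - x) - D = (f (x + t) - f x - t * D) / t"
      using t0 by (simp add: t_def field_simps)
    ultimately have "dist ((f y - f x) / (y - x)) D \<le> \<bar>C\<bar> * \<bar>t\<bar>"
      using t0 by (simp add: dist_real_def abs_divide divide_le_eq power2_eq_square mult.assoc)
    also have "\<dots> < e"
    proof -
      have "(\<bar>C\<bar> + 1) * \<bar>t\<bar> < e" using tr e by (simp add: r_def field_simps)
      then show ?thesis by (smt (verit) abs_ge_zero mult_right_mono)
    qed
    finally show "dist ((f y - f x) / (y - x)) D < e" .
  qed
qed

lemma DERIV_intermediate_value: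
  fixes f f' :: "real \<Rightarrow> real"
  assumes ab: "a < b" and deriv: "\<And>x. x \<in> {a..b} \<Longrightarrow> (f has_real_derivative f' x) (at x)"
    and below: "f' a < c" and above: "c < f' b"
  obtains x where "a < x" "x < b" "f' x = c"
proof -
  define g where "g x = f x - c * x" for x
  have g': "(g has_real_derivative f' x - c) (at x)" if "x \<in> {a..b}" for x
    unfolding g_def using DERIV_diff[OF deriv[OF that] DERIV_cmult_Id[of c]] by simp
  have "continuous_on {a..b} g"
    by (intro continuous_at_imp_continuous_on ballI DERIV_isCont[OF g'])
  then have "\<exists>x\<in>{a..b}. \<forall>y\<in>{a..b}. g x \<le> g y"
    by (rule continuous_attains_inf[OF compact_Icc, rotated]) (use ab in simp)
  then obtain x where x: "x \<in> {a..b}" and min: "\<And>y. y \<in> {a..b} \<Longrightarrow> g x \<le> g y"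
    by blast
  have a: "a \<in> {a..b}" and b: "b \<in> {a..b}" using ab by auto
  \<comment> \<open>g decreases to the right of a and increases to the left of b, so its minimum is interior\<close>
  have "x \<noteq> a"
  proof
    assume "x = a"
    have "f' a - c < 0" using below by simp
    from DERIV_neg_dec_right[OF g'[OF a] this]
    obtain d where "d > 0" and dec: "\<And>t. t > 0 \<Longrightarrow> t < d \<Longrightarrow> g a > g (a + t)" by blast
    define t where "t = min (d / 2) (b - a)"
    have "t > 0" "t < d" "a + t \<in> {a..b}" using \<open>d > 0\<close> ab by (auto simp: t_def)
    with dec[of t] min[of "a + t"] \<open>x = a\<close> show False by simp
  qed
  moreover have "x \<noteq> b"
  proof
    assume "x = b"
    have "f' b - c > 0" using above by simp
    from DERIV_pos_inc_left[OF g'[OF b] this]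
    obtain d where "d > 0" and inc: "\<And>t. t > 0 \<Longrightarrow> t < d \<Longrightarrow> g (b - t) < g b" by blast
    define t where "t = min (d / 2) (b - a)"
    have "t > 0" "t < d" "b - t \<in> {a..b}" using \<open>d > 0\<close> ab by (auto simp: t_def)
    with inc[of t] min[of "b - t"] \<open>x = b\<close> show False by simp
  qed
  ultimately have interior: "a < x" "x < b" using x by auto
  have "f' x - c = 0"
  proof (rule DERIV_local_min[OF g'[OF x]])
    show "0 < min (x - a) (b - x)" using interior by simp
    show "\<forall>y. \<bar>x - y\<bar> < min (x - a) (b - x) \<longrightarrow> g x \<le> g y" by (auto intro!: min)
  qed
  with interior that show thesis by simp
qed

lemma (in prob_space) exists_le_integral:
  fixes f :: "'a \<Rightarrow> real"
  assumes f: "integrable M f"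
  obtains \<omega> where "\<omega> \<in> space M" "f \<omega> \<le> (\<integral>x. f x \<partial>M)"
proof -
  have "\<not> (\<forall>\<omega>\<in>space M. (\<integral>x. f x \<partial>M) < f \<omega>)"
  proof
    assume "\<forall>\<omega>\<in>space M. (\<integral>x. f x \<partial>M) < f \<omega>"
    then have "AE \<omega> in M. (\<integral>x. f x \<partial>M) < f \<omega>" by (intro AE_I2) blast
    from integral_less_AE_space[OF integrable_const f this]
    show False by (simp add: emeasure_space_1 prob_space)
  qed
  then show thesis using that by (auto simp: not_less)
qed

lemma (in prob_space) exists_ge_integral:
  fixes f :: "'a \<Rightarrow> real"
  assumes f: "integrable M f"
  obtains \<omega> where "\<omega> \<in> space M" "(\<integral>x. f x \<partial>M) \<le> f \<omega>"
proof -
  obtain \<omega> where "\<omega> \<in> space M" "- f \<omega> \<le> (\<integral>x. - f x \<partial>M)"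
    using exists_le_integral[OF integrable_minus[OF f]] .
  then show thesis using that by simp
qed

section \<open>Differentiability and strict convexity of the log-partition function\<close>

locale exp_family =
  fixes \<mu> :: "'a measure" and h T :: "'a \<Rightarrow> real"
  assumes h_meas[measurable]: "h \<in> borel_measurable \<mu>"
    and h_nonneg: "\<And>x. x \<in> space \<mu> \<Longrightarrow> h x \<ge> 0"
    and T_meas[measurable]: "T \<in> borel_measurable \<mu>"
    and minimal: "minimal_ef \<mu> h T"
begin

abbreviation \<Theta> :: "real set" where "\<Theta> \<equiv> natural_param_space \<mu> h T"

definition Z :: "real \<Rightarrow> real" where "Z \<eta> = (\<integral>x. h x * exp (\<eta> * T x) \<partial>\<mu>)"

definition M :: "real \<Rightarrow> real" where "M \<eta> = (\<integral>x. T x * (h x * exp (\<eta> * T x)) \<partial>\<mu>)"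

definition Z_on :: "'a set \<Rightarrow> real \<Rightarrow> real" where
  "Z_on B \<eta> = (\<integral>x. indicator B x * (h x * exp (\<eta> * T x)) \<partial>\<mu>)"

definition mean :: "('a \<Rightarrow> real) \<Rightarrow> real \<Rightarrow> real" where
  "mean g \<eta> = (\<integral>x. g x * (h x * exp (\<eta> * T x)) \<partial>\<mu>) / Z \<eta>"

lemma integrable_param_space: "\<eta> \<in> \<Theta> \<Longrightarrow> integrable \<mu> (\<lambda>x. h x * exp (\<eta> * T x))"
  by (simp add: natural_param_space_def)

lemma interior_param_spaceE:
  assumes "\<eta> \<in> interior \<Theta>"
  obtains d where "d > 0" "\<And>s. \<bar>s\<bar> \<le> d \<Longrightarrow> \<eta> + s \<in> \<Theta>"
proof -
  obtain e where "e > 0" and ball: "ball \<eta> e \<subseteq> \<Theta>" using assms by (meson mem_interior)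
  show thesis
  proof (rule that[of "e / 2"])
    fix s :: real assume "\<bar>s\<bar> \<le> e / 2"
    with \<open>e > 0\<close> have "\<eta> + s \<in> ball \<eta> e" by (simp add: dist_real_def)
    with ball show "\<eta> + s \<in> \<Theta>" by blast
  qed (use \<open>e > 0\<close> in simp)
qed

lemma not_AE_T_eq: "\<not> (AE x in \<mu>. 0 < h x \<longrightarrow> T x = c)"
  using minimal by (simp add: minimal_ef_def AE_density)

lemma Z_pos:
  assumes "\<eta> \<in> \<Theta>" shows "Z \<eta> > 0"
proof -
  have nonneg: "AE x in \<mu>. 0 \<le> h x * exp (\<eta> * T x)" using h_nonneg by (auto intro!: AE_I2)
  have "Z \<eta> \<noteq> 0"
  proof
    assume "Z \<eta> = 0"
    then have "AE x in \<mu>. h x * exp (\<eta> * T x) = 0"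
      using integral_nonneg_eq_0_iff_AE[OF integrable_param_space[OF assms] nonneg] by (simp add: Z_def)
    then have "AE x in \<mu>. 0 < h x \<longrightarrow> T x = 0" by eventually_elim simp
    with not_AE_T_eq show False by blast
  qed
  moreover have "Z \<eta> \<ge> 0" unfolding Z_def using nonneg by (rule integral_nonneg_AE)
  ultimately show ?thesis by simp
qed

lemma A_eq_ln_Z: "ef_A \<mu> h T = (\<lambda>\<eta>. ln (Z \<eta>))"
  by (simp add: fun_eq_iff ef_A_def Z_def)

lemma ef_density_eq:
  assumes "\<eta> \<in> \<Theta>" shows "ef_density \<mu> h T \<eta> x = h x * exp (\<eta> * T x) / Z \<eta>"
  using Z_pos[OF assms] by (simp add: ef_density_def A_eq_ln_Z exp_diff)

lemma ef_density_measurable[measurable]: "ef_density \<mu> h T \<eta> \<in> borel_measurable \<mu>"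
  unfolding ef_density_def by measurable

lemma moment_integrable:
  assumes "\<eta> \<in> interior \<Theta>" shows "integrable \<mu> (\<lambda>x. T x * (h x * exp (\<eta> * T x)))"
proof -
  obtain d where d: "d > 0" and nbhd: "\<And>s. \<bar>s\<bar> \<le> d \<Longrightarrow> \<eta> + s \<in> \<Theta>"
    using interior_param_spaceE[OF assms] by blast
  have "\<eta> + d \<in> \<Theta>" "\<eta> - d \<in> \<Theta>" using nbhd[of d] nbhd[of "- d"] d by simp_all
  then have "integrable \<mu> (\<lambda>x. (h x * exp ((\<eta> + d) * T x) + h x * exp ((\<eta> - d) * T x)) / d)"
    using integrable_param_space by auto
  then show ?thesis
  proof (rule Bochner_Integration.integrable_bound)
    show "AE x in \<mu>. norm (T x * (h x * exp (\<eta> * T x)))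
        \<le> norm ((h x * exp ((\<eta> + d) * T x) + h x * exp ((\<eta> - d) * T x)) / d)"
    proof (rule AE_I2)
      fix x assume x: "x \<in> space \<mu>"
      have "norm (T x * (h x * exp (\<eta> * T x))) = h x * (\<bar>T x\<bar> * exp (\<eta> * T x))"
        using h_nonneg[OF x] by (simp add: abs_mult)
      also have "\<dots> \<le> h x * ((exp ((\<eta> + d) * T x) + exp ((\<eta> - d) * T x)) / d)"
        using abs_mult_exp_le[OF d] h_nonneg[OF x] by (rule mult_left_mono)
      also have "\<dots> = (h x * exp ((\<eta> + d) * T x) + h x * exp ((\<eta> - d) * T x)) / d"
        by (simp add: distrib_left)
      also have "\<dots> \<le> norm ((h x * exp ((\<eta> + d) * T x) + h x * exp ((\<eta> - d) * T x)) / d)"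
        by (simp only: real_norm_def abs_ge_self)
      finally show "norm (T x * (h x * exp (\<eta> * T x)))
        \<le> norm ((h x * exp ((\<eta> + d) * T x) + h x * exp ((\<eta> - d) * T x)) / d)" .
    qed
  qed measurable
qed

lemma Z_has_real_derivative:
  assumes "\<eta> \<in> interior \<Theta>" shows "(Z has_real_derivative M \<eta>) (at \<eta>)"
proof -
  obtain d2 where d2: "d2 > 0" and nbhd: "\<And>s. \<bar>s\<bar> \<le> d2 \<Longrightarrow> \<eta> + s \<in> \<Theta>"
    using interior_param_spaceE[OF assms] by blast
  define d where "d = d2 / 2"
  have d: "d > 0" using d2 by (simp add: d_def)
  have plus: "\<eta> + 2 * d \<in> \<Theta>" and minus: "\<eta> - 2 * d \<in> \<Theta>"
    using nbhd[of d2] nbhd[of "- d2"] d2 by (simp_all add: d_def)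
  have \<eta>: "\<eta> \<in> \<Theta>" using nbhd[of 0] d2 by simp
  note integrable = integrable_param_space[OF plus] integrable_param_space[OF minus]
    integrable_param_space[OF \<eta>] moment_integrable[OF assms]
  show ?thesis
  proof (rule DERIV_of_quadratic_remainder[OF d])
    fix s :: real assume s: "\<bar>s\<bar> \<le> d"
    have "\<eta> + s \<in> \<Theta>" using nbhd s by (simp add: d_def)
    note integrable = integrable integrable_param_space[OF this]
    define r where "r x = h x * exp (\<eta> * T x) * (exp (s * T x) - 1 - s * T x)" for x
    have r_eq: "r x = h x * exp ((\<eta> + s) * T x) - h x * exp (\<eta> * T x)
        - s * (T x * (h x * exp (\<eta> * T x)))" for x
      by (simp add: r_def exp_add[symmetric] algebra_simps)
    have "Z (\<eta> + s) - Z \<eta> - s * M \<eta> = (\<integral>x. r x \<partial>\<mu>)"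
      unfolding r_eq Z_def M_def using integrable by simp
    then have "\<bar>Z (\<eta> + s) - Z \<eta> - s * M \<eta>\<bar> \<le> (\<integral>x. norm (r x) \<partial>\<mu>)"
      using integral_norm_bound[of \<mu> r] by simp
    also have "\<dots> \<le> (\<integral>x. s^2 * ((2 / d^2) * (h x * exp ((\<eta> + 2 * d) * T x)
        + h x * exp ((\<eta> - 2 * d) * T x))) \<partial>\<mu>)"
    proof (rule integral_mono)
      show "integrable \<mu> (\<lambda>x. norm (r x))" unfolding r_eq using integrable by auto
      fix x assume x: "x \<in> space \<mu>"
      have "norm (r x) = h x * (exp (\<eta> * T x) * \<bar>exp (s * T x) - 1 - s * T x\<bar>)"
        using h_nonneg[OF x] by (simp add: r_def abs_mult)
      also have "\<dots> \<le> h x * (s^2 * ((2 / d^2) * (exp ((\<eta> + 2 * d) * T x) + exp ((\<eta> - 2 * d) * T x))))"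
        using exp_remainder_mult_exp_le[OF d s] h_nonneg[OF x] by (rule mult_left_mono)
      finally show "norm (r x) \<le> s^2 * ((2 / d^2) * (h x * exp ((\<eta> + 2 * d) * T x)
        + h x * exp ((\<eta> - 2 * d) * T x)))" by (simp add: algebra_simps)
    qed (use integrable in auto)
    also have "\<dots> = (2 / d^2) * (Z (\<eta> + 2 * d) + Z (\<eta> - 2 * d)) * s^2"
      unfolding Z_def using integrable by simp
    finally show "\<bar>Z (\<eta> + s) - Z \<eta> - s * M \<eta>\<bar> \<le> (2 / d^2) * (Z (\<eta> + 2 * d) + Z (\<eta> - 2 * d)) * s^2" .
  qed
qed

lemma A_has_real_derivative:
  assumes "\<eta> \<in> interior \<Theta>" shows "(ef_A \<mu> h T has_real_derivative mean T \<eta>) (at \<eta>)"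
  using DERIV_chain2[OF DERIV_ln_divide[OF Z_pos] Z_has_real_derivative[OF assms]]
    assms interior_subset
  by (auto simp: A_eq_ln_Z mean_def M_def)

lemma deriv_A:
  assumes "\<eta> \<in> interior \<Theta>" shows "deriv (ef_A \<mu> h T) \<eta> = mean T \<eta>"
  using A_has_real_derivative[OF assms] by (rule DERIV_imp_deriv)

lemma A_strict_subgradient:
  assumes \<eta>: "\<eta> \<in> interior \<Theta>" and \<eta>': "\<eta>' \<in> \<Theta>" and ne: "\<eta>' \<noteq> \<eta>"
  shows "ef_A \<mu> h T \<eta>' > ef_A \<mu> h T \<eta> + (\<eta>' - \<eta>) * deriv (ef_A \<mu> h T) \<eta>"
proof -
  have \<eta>_param: "\<eta> \<in> \<Theta>" using \<eta> interior_subset by blast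
  define m where "m = M \<eta> / Z \<eta>"
  define s where "s = \<eta>' - \<eta>"
  have "s \<noteq> 0" using ne by (simp add: s_def)
  have Z: "Z \<eta> > 0" "Z \<eta>' > 0" using Z_pos \<eta>_param \<eta>' by auto
  note integrable = integrable_param_space[OF \<eta>_param] integrable_param_space[OF \<eta>']
    moment_integrable[OF \<eta>]
  \<comment> \<open>g is the integrand of exp(-s m) Z(\<eta>') - Z(\<eta>) - s (M(\<eta>) - m Z(\<eta>)), in which the last term vanishes\<close>
  define g where "g x = exp (- s * m) * (h x * exp (\<eta>' * T x))
      - (1 - s * m) * (h x * exp (\<eta> * T x)) - s * (T x * (h x * exp (\<eta> * T x)))" for x
  have g_eq: "g x = h x * exp (\<eta> * T x) * (exp (s * (T x - m)) - 1 - s * (T x - m))" for x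
  proof -
    have "exp (- s * m) * (h x * exp (\<eta>' * T x)) = h x * exp (\<eta> * T x) * exp (s * (T x - m))"
      by (simp add: exp_add[symmetric] s_def algebra_simps)
    then show ?thesis unfolding g_def by (simp add: algebra_simps)
  qed
  have g_integrable: "integrable \<mu> g" unfolding g_def using integrable by auto
  have g_nonneg: "AE x in \<mu>. 0 \<le> g x"
  proof (rule AE_I2)
    fix x assume x: "x \<in> space \<mu>"
    have "0 \<le> exp (s * (T x - m)) - 1 - s * (T x - m)"
      using exp_ge_add_one_self[of "s * (T x - m)"] by linarith
    then show "0 \<le> g x" unfolding g_eq using h_nonneg[OF x] by simp
  qed
  have integral_g: "(\<integral>x. g x \<partial>\<mu>) = exp (- s * m) * Z \<eta>' - Z \<eta>"
  proof -
    have "(\<integral>x. g x \<partial>\<mu>) = exp (- s * m) * Z \<eta>' - (1 - s * m) * Z \<eta> - s * M \<eta>"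
      unfolding g_def Z_def M_def using integrable by simp
    also have "\<dots> = exp (- s * m) * Z \<eta>' - Z \<eta>" using Z by (simp add: m_def field_simps)
    finally show ?thesis .
  qed
  have "(\<integral>x. g x \<partial>\<mu>) \<noteq> 0"
  proof
    assume "(\<integral>x. g x \<partial>\<mu>) = 0"
    then have "AE x in \<mu>. g x = 0" using integral_nonneg_eq_0_iff_AE[OF g_integrable g_nonneg] by simp
    then have "AE x in \<mu>. 0 < h x \<longrightarrow> T x = m"
    proof eventually_elim
      case (elim x)
      show ?case
      proof
        assume "0 < h x"
        with elim have "exp (s * (T x - m)) = 1 + s * (T x - m)" by (simp add: g_eq)
        with \<open>s \<noteq> 0\<close> show "T x = m" by (simp add: exp_eq_one_plus_iff)
      qed
    qed
    with not_AE_T_eq show False by blast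
  qed
  moreover have "(\<integral>x. g x \<partial>\<mu>) \<ge> 0" using g_nonneg by (rule integral_nonneg_AE)
  ultimately have "Z \<eta> * exp (s * m) < Z \<eta>'" using integral_g by (simp add: exp_minus field_simps)
  then have "ln (Z \<eta> * exp (s * m)) < ln (Z \<eta>')" using Z by simp
  then have "ln (Z \<eta>) + s * m < ln (Z \<eta>')" using Z by (simp add: ln_mult)
  then show ?thesis
    unfolding deriv_A[OF \<eta>] by (simp add: A_eq_ln_Z s_def m_def mean_def M_def)
qed

lemma deriv_A_strict_mono_on: "strict_mono_on (interior \<Theta>) (deriv (ef_A \<mu> h T))"
proof (rule strict_mono_onI)
  fix a b assume a: "a \<in> interior \<Theta>" and b: "b \<in> interior \<Theta>" and "a < b"
  have "a \<in> \<Theta>" "b \<in> \<Theta>" using a b interior_subset by blast+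
  with A_strict_subgradient[OF a] A_strict_subgradient[OF b] \<open>a < b\<close>
  have "ef_A \<mu> h T b > ef_A \<mu> h T a + (b - a) * deriv (ef_A \<mu> h T) a"
    and "ef_A \<mu> h T a > ef_A \<mu> h T b + (a - b) * deriv (ef_A \<mu> h T) b" by auto
  then have "(b - a) * deriv (ef_A \<mu> h T) a < (b - a) * deriv (ef_A \<mu> h T) b"
    by (simp add: algebra_simps)
  with \<open>a < b\<close> show "deriv (ef_A \<mu> h T) a < deriv (ef_A \<mu> h T) b" by simp
qed

lemma deriv_A_inj:
  assumes "a \<in> interior \<Theta>" "b \<in> interior \<Theta>" "deriv (ef_A \<mu> h T) a = deriv (ef_A \<mu> h T) b"
  shows "a = b"
  using inj_onD[OF strict_mono_on_imp_inj_on[OF deriv_A_strict_mono_on]] assms by blast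

lemma integrable_Z_on:
  assumes "B \<in> sets \<mu>" "\<eta> \<in> \<Theta>"
  shows "integrable \<mu> (\<lambda>x. indicator B x * (h x * exp (\<eta> * T x)))"
  using integrable_mult_indicator[OF assms(1) integrable_param_space[OF assms(2)]] by simp

lemma Z_on_space: "Z_on (space \<mu>) = Z"
  unfolding Z_def Z_on_def by (intro ext Bochner_Integration.integral_cong) auto

lemma convex_on_Z_on:
  assumes B: "B \<in> sets \<mu>" and S: "convex S" "S \<subseteq> \<Theta>"
  shows "convex_on S (Z_on B)"
proof (rule convex_onI[OF _ S(1)])
  fix t x y :: real assume t: "0 < t" "t < 1" and xy: "x \<in> S" "y \<in> S"
  have "(1 - t) * x + t * y \<in> S" using convexD[OF S(1) xy, of "1 - t" t] t by simp
  then have "x \<in> \<Theta>" "y \<in> \<Theta>" "(1 - t) * x + t * y \<in> \<Theta>" using xy S(2) by auto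
  note integrable = integrable_Z_on[OF B this(1)] integrable_Z_on[OF B this(2)]
    integrable_Z_on[OF B this(3)]
  have "Z_on B ((1 - t) * x + t * y) \<le> (\<integral>z. (1 - t) * (indicator B z * (h z * exp (x * T z)))
      + t * (indicator B z * (h z * exp (y * T z))) \<partial>\<mu>)"
    unfolding Z_on_def
  proof (rule integral_mono)
    fix z assume z: "z \<in> space \<mu>"
    have "exp (((1 - t) * x + t * y) * T z) \<le> (1 - t) * exp (x * T z) + t * exp (y * T z)"
      using convex_onD[OF exp_convex, of t "x * T z" "y * T z"] t by (simp add: algebra_simps)
    then have "indicator B z * h z * exp (((1 - t) * x + t * y) * T z)
        \<le> indicator B z * h z * ((1 - t) * exp (x * T z) + t * exp (y * T z))"
      using h_nonneg[OF z] by (intro mult_left_mono) auto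
    then show "indicator B z * (h z * exp (((1 - t) * x + t * y) * T z))
        \<le> (1 - t) * (indicator B z * (h z * exp (x * T z))) + t * (indicator B z * (h z * exp (y * T z)))"
      by (simp add: algebra_simps)
  qed (use integrable in auto)
  also have "\<dots> = (1 - t) * Z_on B x + t * Z_on B y"
    unfolding Z_on_def using integrable by auto
  finally show "Z_on B ((1 - t) *\<^sub>R x + t *\<^sub>R y) \<le> (1 - t) * Z_on B x + t * Z_on B y" by simp
qed

lemma continuous_on_Z_on:
  assumes "B \<in> sets \<mu>" "open S" "convex S" "S \<subseteq> \<Theta>"
  shows "continuous_on S (Z_on B)"
  using convex_on_continuous[OF _ convex_on_Z_on] assms by blast

end

section \<open>Mixing over the test parameter\<close>

locale exp_family_mixture = exp_family +
  fixes P :: "'w measure" and \<eta>test :: "'w \<Rightarrow> real" and Y :: "'w \<Rightarrow> 'a"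
  assumes param: "{0<..} \<subseteq> interior (natural_param_space \<mu> h T)"
    and P: "prob_space P"
    and eta_meas[measurable]: "\<eta>test \<in> borel_measurable P"
    and eta_pos: "\<And>\<omega>. \<omega> \<in> space P \<Longrightarrow> \<eta>test \<omega> > 0"
    and Y_meas[measurable]: "Y \<in> measurable P \<mu>"
    and cond: "\<And>S B. S \<in> sets borel \<Longrightarrow> B \<in> sets \<mu> \<Longrightarrow>
        emeasure P {\<omega> \<in> space P. \<eta>test \<omega> \<in> S \<and> Y \<omega> \<in> B}
        = (\<integral>\<^sup>+\<omega>. indicator S (\<eta>test \<omega>) *
              emeasure (density \<mu> (\<lambda>x. ennreal (ef_density \<mu> h T (\<eta>test \<omega>) x))) B \<partial>P)"
begin

interpretation P: prob_space P by (rule P)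

lemma pos_interior_param_space: "\<eta> > 0 \<Longrightarrow> \<eta> \<in> interior \<Theta>"
  using param by auto

lemma pos_param_space: "\<eta> > 0 \<Longrightarrow> \<eta> \<in> \<Theta>"
  using pos_interior_param_space interior_subset by blast

definition kernel :: "'w \<Rightarrow> 'a measure" where
  "kernel \<omega> = density \<mu> (\<lambda>x. ennreal (ef_density \<mu> h T (\<eta>test \<omega>) x))"

lemma sets_kernel[simp]: "sets (kernel \<omega>) = sets \<mu>"
  by (simp add: kernel_def)

lemma space_kernel[simp]: "space (kernel \<omega>) = space \<mu>"
  by (simp add: kernel_def)

lemma emeasure_Y_vimage:
  assumes "B \<in> sets \<mu>"
  shows "emeasure P (Y -` B \<inter> space P) = (\<integral>\<^sup>+\<omega>. emeasure (kernel \<omega>) B \<partial>P)"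
proof -
  have "Y -` B \<inter> space P = {\<omega> \<in> space P. \<eta>test \<omega> \<in> UNIV \<and> Y \<omega> \<in> B}" by auto
  then show ?thesis using cond[of UNIV B] assms by (simp add: kernel_def)
qed

lemma emeasure_kernel:
  assumes \<omega>: "\<omega> \<in> space P" and B: "B \<in> sets \<mu>"
  shows "emeasure (kernel \<omega>) B = ennreal (Z_on B (\<eta>test \<omega>) / Z (\<eta>test \<omega>))"
proof -
  have \<eta>: "\<eta>test \<omega> \<in> \<Theta>" using pos_param_space eta_pos[OF \<omega>] .
  have "emeasure (kernel \<omega>) B
      = (\<integral>\<^sup>+x. ennreal (ef_density \<mu> h T (\<eta>test \<omega>) x) * indicator B x \<partial>\<mu>)"
    unfolding kernel_def by (rule emeasure_density) (auto simp: B)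
  also have "\<dots> = (\<integral>\<^sup>+x. ennreal (indicator B x * (h x * exp (\<eta>test \<omega> * T x)) / Z (\<eta>test \<omega>)) \<partial>\<mu>)"
    by (intro nn_integral_cong) (auto simp: ef_density_eq[OF \<eta>] split: split_indicator)
  also have "\<dots> = ennreal (\<integral>x. indicator B x * (h x * exp (\<eta>test \<omega> * T x)) / Z (\<eta>test \<omega>) \<partial>\<mu>)"
    using integrable_Z_on[OF B \<eta>] Z_pos[OF \<eta>] h_nonneg
    by (intro nn_integral_eq_integral) (auto intro!: AE_I2 simp: indicator_def)
  finally show ?thesis by (simp add: Z_on_def)
qed

lemma prob_space_kernel:
  assumes "\<omega> \<in> space P" shows "prob_space (kernel \<omega>)"
proof
  have "emeasure (kernel \<omega>) (space \<mu>) = ennreal (Z_on (space \<mu>) (\<eta>test \<omega>) / Z (\<eta>test \<omega>))"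
    by (rule emeasure_kernel[OF assms]) simp
  also have "\<dots> = 1"
    using Z_pos[OF pos_param_space[OF eta_pos[OF assms]]] by (simp add: Z_on_space)
  finally show "emeasure (kernel \<omega>) (space (kernel \<omega>)) = 1" by simp
qed

text \<open>Measurability of \<omega> \<mapsto> Z_on B (\<eta>test \<omega>) comes from convexity, hence continuity, of Z_on B.\<close>
lemma Z_on_eta_measurable[measurable]:
  assumes "B \<in> sets \<mu>" shows "(\<lambda>\<omega>. Z_on B (\<eta>test \<omega>)) \<in> borel_measurable P"
proof -
  have "\<eta>test \<in> measurable P (restrict_space borel {0<..})"
    by (rule measurable_restrict_space2) (auto simp: eta_pos)
  moreover have "continuous_on {0<..} (Z_on B)"
    by (rule continuous_on_Z_on[OF assms]) (auto simp: convex_real_interval pos_param_space)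
  then have "Z_on B \<in> borel_measurable (restrict_space borel {0<..})"
    by (rule borel_measurable_continuous_on_restrict)
  ultimately show ?thesis using measurable_compose by (simp add: comp_def)
qed

lemma kernel_measurable: "kernel \<in> measurable P (subprob_algebra \<mu>)"
proof (rule measurable_subprob_algebra)
  fix \<omega> assume "\<omega> \<in> space P"
  then show "subprob_space (kernel \<omega>)" by (intro prob_space_imp_subprob_space prob_space_kernel)
next
  fix B assume B: "B \<in> sets \<mu>"
  have "(\<lambda>\<omega>. ennreal (Z_on B (\<eta>test \<omega>) / Z_on (space \<mu>) (\<eta>test \<omega>))) \<in> borel_measurable P"
    using B by measurable
  then show "(\<lambda>\<omega>. emeasure (kernel \<omega>) B) \<in> borel_measurable P"
    by (rule measurable_cong[THEN iffD1, rotated]) (simp add: emeasure_kernel B Z_on_space)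
qed simp

lemma distr_Y_eq_bind_kernel: "distr P \<mu> Y = P \<bind> kernel"
proof (rule measure_eqI)
  show "sets (distr P \<mu> Y) = sets (P \<bind> kernel)"
    using P.not_empty by (simp add: sets_bind)
next
  fix B assume "B \<in> sets (distr P \<mu> Y)"
  then have B: "B \<in> sets \<mu>" by simp
  have "emeasure (distr P \<mu> Y) B = emeasure P (Y -` B \<inter> space P)" by (rule emeasure_distr[OF Y_meas B])
  also have "\<dots> = (\<integral>\<^sup>+\<omega>. emeasure (kernel \<omega>) B \<partial>P)" by (rule emeasure_Y_vimage[OF B])
  also have "\<dots> = emeasure (P \<bind> kernel) B"
    by (rule emeasure_bind[symmetric, OF P.not_empty kernel_measurable B])
  finally show "emeasure (distr P \<mu> Y) B = emeasure (P \<bind> kernel) B" .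
qed

lemma nn_integral_Y:
  assumes g[measurable]: "g \<in> borel_measurable \<mu>"
  shows "(\<integral>\<^sup>+\<omega>. g (Y \<omega>) \<partial>P) = (\<integral>\<^sup>+\<omega>. (\<integral>\<^sup>+x. g x \<partial>kernel \<omega>) \<partial>P)"
proof -
  have "(\<integral>\<^sup>+\<omega>. g (Y \<omega>) \<partial>P) = (\<integral>\<^sup>+x. g x \<partial>distr P \<mu> Y)"
    by (rule nn_integral_distr[symmetric]) auto
  also have "\<dots> = (\<integral>\<^sup>+\<omega>. (\<integral>\<^sup>+x. g x \<partial>kernel \<omega>) \<partial>P)"
    unfolding distr_Y_eq_bind_kernel by (rule nn_integral_bind[OF g kernel_measurable])
  finally show ?thesis .
qed

lemma AE_h_Y_pos: "AE \<omega> in P. h (Y \<omega>) > 0"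
proof -
  define B where "B = {x \<in> space \<mu>. h x \<le> 0}"
  have B: "B \<in> sets \<mu>" unfolding B_def by measurable
  have "Z_on B \<eta> = 0" for \<eta>
    unfolding Z_on_def
    by (subst Bochner_Integration.integral_cong[where g="\<lambda>_. 0"])
       (auto simp: B_def indicator_def dest: h_nonneg)
  then have "emeasure P (Y -` B \<inter> space P) = 0"
    by (simp add: emeasure_Y_vimage[OF B] emeasure_kernel[OF _ B] cong: nn_integral_cong)
  moreover have "{\<omega> \<in> space P. \<not> 0 < h (Y \<omega>)} = Y -` B \<inter> space P"
    using measurable_space[OF Y_meas] by (auto simp: B_def)
  ultimately show ?thesis using B by (subst AE_iff_measurable) auto
qed

lemma nn_integral_kernel:
  assumes \<omega>: "\<omega> \<in> space P" and g[measurable]: "g \<in> borel_measurable \<mu>"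
    and g_nonneg: "\<And>x. x \<in> space \<mu> \<Longrightarrow> g x \<ge> 0"
    and g_integrable: "integrable \<mu> (\<lambda>x. g x * (h x * exp (\<eta>test \<omega> * T x)))"
  shows "(\<integral>\<^sup>+x. ennreal (g x) \<partial>kernel \<omega>) = ennreal (mean g (\<eta>test \<omega>))"
proof -
  let ?\<eta> = "\<eta>test \<omega>"
  have \<eta>: "?\<eta> \<in> \<Theta>" using pos_param_space eta_pos[OF \<omega>] .
  have "(\<integral>\<^sup>+x. ennreal (g x) \<partial>kernel \<omega>)
      = (\<integral>\<^sup>+x. ennreal (ef_density \<mu> h T ?\<eta> x) * ennreal (g x) \<partial>\<mu>)"
    unfolding kernel_def by (rule nn_integral_density) auto
  also have "\<dots> = (\<integral>\<^sup>+x. ennreal (g x * (h x * exp (?\<eta> * T x)) / Z ?\<eta>) \<partial>\<mu>)"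
    using Z_pos[OF \<eta>] h_nonneg g_nonneg
    by (intro nn_integral_cong) (auto simp: ef_density_eq[OF \<eta>] ennreal_mult'[symmetric] field_simps)
  also have "\<dots> = ennreal (\<integral>x. g x * (h x * exp (?\<eta> * T x)) / Z ?\<eta> \<partial>\<mu>)"
    using g_integrable Z_pos[OF \<eta>] h_nonneg g_nonneg
    by (intro nn_integral_eq_integral) (auto intro!: AE_I2)
  finally show ?thesis by (simp add: mean_def)
qed

lemma mean_nonneg:
  assumes "\<eta> > 0" and "\<And>x. x \<in> space \<mu> \<Longrightarrow> g x \<ge> 0" shows "mean g \<eta> \<ge> 0"
  unfolding mean_def using Z_pos[OF pos_param_space] assms h_nonneg
  by (intro divide_nonneg_pos integral_nonneg_AE AE_I2) auto

lemma integral_Y_eq_integral_mean: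
  assumes g[measurable]: "g \<in> borel_measurable \<mu>"
    and g_nonneg: "\<And>x. x \<in> space \<mu> \<Longrightarrow> g x \<ge> 0"
    and gY_integrable: "integrable P (\<lambda>\<omega>. g (Y \<omega>))"
    and g_integrable: "\<And>\<eta>. \<eta> > 0 \<Longrightarrow> integrable \<mu> (\<lambda>x. g x * (h x * exp (\<eta> * T x)))"
  shows "integrable P (\<lambda>\<omega>. mean g (\<eta>test \<omega>))"
    and "(\<integral>\<omega>. g (Y \<omega>) \<partial>P) = (\<integral>\<omega>. mean g (\<eta>test \<omega>) \<partial>P)"
proof -
  have kernel: "(\<integral>\<^sup>+x. ennreal (g x) \<partial>kernel \<omega>) = ennreal (mean g (\<eta>test \<omega>))"
    if "\<omega> \<in> space P" for \<omega>
    using nn_integral_kernel[OF that g g_nonneg g_integrable[OF eta_pos[OF that]]] .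
  have AE_mean_nonneg: "AE \<omega> in P. 0 \<le> mean g (\<eta>test \<omega>)"
    using mean_nonneg[OF eta_pos g_nonneg] by (auto intro!: AE_I2)
  have "(\<lambda>\<omega>. \<integral>\<^sup>+x. ennreal (g x) \<partial>kernel \<omega>) \<in> borel_measurable P"
    using measurable_compose[OF kernel_measurable nn_integral_measurable_subprob_algebra[of _ \<mu>]]
    by (simp add: comp_def)
  then have "(\<lambda>\<omega>. enn2real (\<integral>\<^sup>+x. ennreal (g x) \<partial>kernel \<omega>)) \<in> borel_measurable P" by measurable
  then have measurable: "(\<lambda>\<omega>. mean g (\<eta>test \<omega>)) \<in> borel_measurable P"
    by (rule measurable_cong[THEN iffD1, rotated])
       (simp add: kernel mean_nonneg[OF eta_pos g_nonneg])
  have "(\<integral>\<^sup>+\<omega>. ennreal (g (Y \<omega>)) \<partial>P) = (\<integral>\<^sup>+\<omega>. ennreal (mean g (\<eta>test \<omega>)) \<partial>P)"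
    using nn_integral_Y[of "\<lambda>x. ennreal (g x)"] by (auto intro!: nn_integral_cong simp: kernel)
  moreover have "(\<integral>\<^sup>+\<omega>. ennreal (g (Y \<omega>)) \<partial>P) = ennreal (\<integral>\<omega>. g (Y \<omega>) \<partial>P)"
    using gY_integrable g_nonneg measurable_space[OF Y_meas]
    by (intro nn_integral_eq_integral) (auto intro!: AE_I2)
  ultimately have nn_mean: "(\<integral>\<^sup>+\<omega>. ennreal (mean g (\<eta>test \<omega>)) \<partial>P) = ennreal (\<integral>\<omega>. g (Y \<omega>) \<partial>P)"
    by simp
  show integrable: "integrable P (\<lambda>\<omega>. mean g (\<eta>test \<omega>))"
    using measurable AE_mean_nonneg by (rule integrableI_nonneg) (simp add: nn_mean)
  have "ennreal (\<integral>\<omega>. mean g (\<eta>test \<omega>) \<partial>P) = ennreal (\<integral>\<omega>. g (Y \<omega>) \<partial>P)"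
    using nn_integral_eq_integral[OF integrable AE_mean_nonneg] nn_mean by simp
  moreover have "(\<integral>\<omega>. g (Y \<omega>) \<partial>P) \<ge> 0"
    using g_nonneg measurable_space[OF Y_meas] by (intro integral_nonneg_AE AE_I2) auto
  moreover have "(\<integral>\<omega>. mean g (\<eta>test \<omega>) \<partial>P) \<ge> 0"
    using AE_mean_nonneg by (rule integral_nonneg_AE)
  ultimately show "(\<integral>\<omega>. g (Y \<omega>) \<partial>P) = (\<integral>\<omega>. mean g (\<eta>test \<omega>) \<partial>P)" by simp
qed

text \<open>The tower property: E T(Y) = E[E(T(Y) | \<eta>test)], applied to the positive and negative parts of T.\<close>
lemma integral_T_Y:
  assumes T_int: "integrable P (\<lambda>\<omega>. T (Y \<omega>))"
  shows "integrable P (\<lambda>\<omega>. deriv (ef_A \<mu> h T) (\<eta>test \<omega>))"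
    and "(\<integral>\<omega>. T (Y \<omega>) \<partial>P) = (\<integral>\<omega>. deriv (ef_A \<mu> h T) (\<eta>test \<omega>) \<partial>P)"
proof -
  define Tp where "Tp x = max (T x) 0" for x
  define Tn where "Tn x = max (- T x) 0" for x
  have [measurable]: "Tp \<in> borel_measurable \<mu>" "Tn \<in> borel_measurable \<mu>"
    unfolding Tp_def Tn_def by measurable
  have TpY: "integrable P (\<lambda>\<omega>. Tp (Y \<omega>))" and TnY: "integrable P (\<lambda>\<omega>. Tn (Y \<omega>))"
    using T_int unfolding Tp_def Tn_def by auto
  have dominated: "integrable \<mu> (\<lambda>x. g x * (h x * exp (\<eta> * T x)))"
    if "\<eta> > 0" and g: "g \<in> borel_measurable \<mu>" and "\<And>x. \<bar>g x\<bar> \<le> \<bar>T x\<bar>" for g \<eta>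
  proof (rule Bochner_Integration.integrable_bound)
    show "integrable \<mu> (\<lambda>x. T x * (h x * exp (\<eta> * T x)))"
      using moment_integrable pos_interior_param_space \<open>\<eta> > 0\<close> by blast
    show "(\<lambda>x. g x * (h x * exp (\<eta> * T x))) \<in> borel_measurable \<mu>" using g by measurable
    show "AE x in \<mu>. norm (g x * (h x * exp (\<eta> * T x))) \<le> norm (T x * (h x * exp (\<eta> * T x)))"
      using that(3) by (auto intro!: AE_I2 mult_right_mono simp: abs_mult)
  qed
  have Tp_int: "integrable \<mu> (\<lambda>x. Tp x * (h x * exp (\<eta> * T x)))"
    and Tn_int: "integrable \<mu> (\<lambda>x. Tn x * (h x * exp (\<eta> * T x)))" if "\<eta> > 0" for \<eta>
    using dominated[OF that] by (auto simp: Tp_def Tn_def)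
  note Tp_mean = integral_Y_eq_integral_mean[of Tp, OF _ _ TpY Tp_int]
  note Tn_mean = integral_Y_eq_integral_mean[of Tn, OF _ _ TnY Tn_int]
  have mean_T: "mean Tp \<eta> - mean Tn \<eta> = deriv (ef_A \<mu> h T) \<eta>" if "\<eta> > 0" for \<eta>
  proof -
    have "mean Tp \<eta> - mean Tn \<eta>
        = (\<integral>x. Tp x * (h x * exp (\<eta> * T x)) - Tn x * (h x * exp (\<eta> * T x)) \<partial>\<mu>) / Z \<eta>"
      unfolding mean_def using Tp_int[OF that] Tn_int[OF that] by (simp add: diff_divide_distrib)
    also have "\<dots> = mean T \<eta>" unfolding mean_def
      by (intro arg_cong[where f="\<lambda>u. u / Z \<eta>"] Bochner_Integration.integral_cong)
         (auto simp: Tp_def Tn_def algebra_simps max_def)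
    finally show ?thesis using deriv_A[OF pos_interior_param_space[OF that]] by simp
  qed
  have deriv_eq: "deriv (ef_A \<mu> h T) (\<eta>test \<omega>) = mean Tp (\<eta>test \<omega>) - mean Tn (\<eta>test \<omega>)"
    if "\<omega> \<in> space P" for \<omega>
    using mean_T[OF eta_pos[OF that]] by simp
  have "integrable P (\<lambda>\<omega>. mean Tp (\<eta>test \<omega>) - mean Tn (\<eta>test \<omega>))"
    using Tp_mean(1) Tn_mean(1) by (auto simp: Tp_def Tn_def)
  then show "integrable P (\<lambda>\<omega>. deriv (ef_A \<mu> h T) (\<eta>test \<omega>))"
    by (simp add: Bochner_Integration.integrable_cong[OF refl deriv_eq])
  have "(\<integral>\<omega>. T (Y \<omega>) \<partial>P) = (\<integral>\<omega>. Tp (Y \<omega>) - Tn (Y \<omega>) \<partial>P)"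
    by (intro Bochner_Integration.integral_cong) (auto simp: Tp_def Tn_def max_def)
  also have "\<dots> = (\<integral>\<omega>. mean Tp (\<eta>test \<omega>) \<partial>P) - (\<integral>\<omega>. mean Tn (\<eta>test \<omega>) \<partial>P)"
    using TpY TnY Tp_mean Tn_mean by (simp add: Tp_def Tn_def)
  also have "\<dots> = (\<integral>\<omega>. deriv (ef_A \<mu> h T) (\<eta>test \<omega>) \<partial>P)"
    using Tp_mean(1) Tn_mean(1)
    by (simp add: Bochner_Integration.integral_cong[OF refl deriv_eq] Tp_def Tn_def)
  finally show "(\<integral>\<omega>. T (Y \<omega>) \<partial>P) = (\<integral>\<omega>. deriv (ef_A \<mu> h T) (\<eta>test \<omega>) \<partial>P)" .
qed

lemma expected_log_loss:
  assumes T_int: "integrable P (\<lambda>\<omega>. T (Y \<omega>))"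
    and logh_int: "integrable P (\<lambda>\<omega>. \<bar>ln (h (Y \<omega>))\<bar>)"
  shows "integrable P (\<lambda>\<omega>. log_loss (ef_density \<mu> h T \<eta>) (Y \<omega>))"
    and "(\<integral>\<omega>. log_loss (ef_density \<mu> h T \<eta>) (Y \<omega>) \<partial>P)
      = ef_A \<mu> h T \<eta> - \<eta> * (\<integral>\<omega>. T (Y \<omega>) \<partial>P) - (\<integral>\<omega>. ln (h (Y \<omega>)) \<partial>P)"
proof -
  have "integrable P (\<lambda>\<omega>. ln (h (Y \<omega>)))"
    using logh_int integrable_abs_iff[of "\<lambda>\<omega>. ln (h (Y \<omega>))"] by simp
  then have integrable: "integrable P (\<lambda>\<omega>. - ln (h (Y \<omega>)) - \<eta> * T (Y \<omega>) + ef_A \<mu> h T \<eta>)"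
    using T_int by auto
  have loss_eq: "AE \<omega> in P. log_loss (ef_density \<mu> h T \<eta>) (Y \<omega>)
      = - ln (h (Y \<omega>)) - \<eta> * T (Y \<omega>) + ef_A \<mu> h T \<eta>"
    using AE_h_Y_pos by eventually_elim (simp add: log_loss_def ef_density_def ln_mult)
  have measurable: "(\<lambda>\<omega>. log_loss (ef_density \<mu> h T \<eta>) (Y \<omega>)) \<in> borel_measurable P"
    unfolding log_loss_def by measurable
  show "integrable P (\<lambda>\<omega>. log_loss (ef_density \<mu> h T \<eta>) (Y \<omega>))"
    using integrable_cong_AE[OF measurable _ loss_eq] integrable by simp
  have "(\<integral>\<omega>. log_loss (ef_density \<mu> h T \<eta>) (Y \<omega>) \<partial>P)
      = (\<integral>\<omega>. - ln (h (Y \<omega>)) - \<eta> * T (Y \<omega>) + ef_A \<mu> h T \<eta> \<partial>P)"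
    using loss_eq by (rule integral_cong_AE[OF measurable, rotated]) simp
  also have "\<dots> = ef_A \<mu> h T \<eta> - \<eta> * (\<integral>\<omega>. T (Y \<omega>) \<partial>P) - (\<integral>\<omega>. ln (h (Y \<omega>)) \<partial>P)"
    using \<open>integrable P (\<lambda>\<omega>. ln (h (Y \<omega>)))\<close> T_int by (simp add: P.prob_space)
  finally show "(\<integral>\<omega>. log_loss (ef_density \<mu> h T \<eta>) (Y \<omega>) \<partial>P)
      = ef_A \<mu> h T \<eta> - \<eta> * (\<integral>\<omega>. T (Y \<omega>) \<partial>P) - (\<integral>\<omega>. ln (h (Y \<omega>)) \<partial>P)" .
qed

lemma expected_log_loss_less:
  assumes T_int: "integrable P (\<lambda>\<omega>. T (Y \<omega>))"
    and logh_int: "integrable P (\<lambda>\<omega>. \<bar>ln (h (Y \<omega>))\<bar>)"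
    and root: "\<eta>s > 0" "deriv (ef_A \<mu> h T) \<eta>s = (\<integral>\<omega>. deriv (ef_A \<mu> h T) (\<eta>test \<omega>) \<partial>P)"
    and \<eta>: "\<eta> > 0" "\<eta> \<noteq> \<eta>s"
  shows "(\<integral>\<omega>. log_loss (ef_density \<mu> h T \<eta>s) (Y \<omega>) \<partial>P)
    < (\<integral>\<omega>. log_loss (ef_density \<mu> h T \<eta>) (Y \<omega>) \<partial>P)"
proof -
  have "ef_A \<mu> h T \<eta> > ef_A \<mu> h T \<eta>s + (\<eta> - \<eta>s) * deriv (ef_A \<mu> h T) \<eta>s"
    using A_strict_subgradient[OF pos_interior_param_space[OF root(1)] pos_param_space[OF \<eta>(1)] \<eta>(2)] .
  moreover have "(\<integral>\<omega>. T (Y \<omega>) \<partial>P) = deriv (ef_A \<mu> h T) \<eta>s"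
    using integral_T_Y(2)[OF T_int] root(2) by simp
  ultimately show ?thesis
    unfolding expected_log_loss(2)[OF T_int logh_int] by (simp add: left_diff_distrib)
qed

lemma exists_deriv_A_eq_mean:
  assumes T_int: "integrable P (\<lambda>\<omega>. T (Y \<omega>))"
  obtains \<eta>s where "\<eta>s > 0" "deriv (ef_A \<mu> h T) \<eta>s = (\<integral>\<omega>. deriv (ef_A \<mu> h T) (\<eta>test \<omega>) \<partial>P)"
proof -
  let ?A' = "deriv (ef_A \<mu> h T)"
  define c where "c = (\<integral>\<omega>. ?A' (\<eta>test \<omega>) \<partial>P)"
  have mono: "?A' a < ?A' b" if "0 < a" "a < b" for a b
    using strict_mono_onD[OF deriv_A_strict_mono_on] that pos_interior_param_space by simp
  \<comment> \<open>halving resp. doubling a suitable value of \<eta>test pushes A' strictly below resp. above c\<close>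
  obtain \<omega>1 where "\<omega>1 \<in> space P" "?A' (\<eta>test \<omega>1) \<le> c"
    using P.exists_le_integral[OF integral_T_Y(1)[OF T_int]] unfolding c_def .
  with mono[of "\<eta>test \<omega>1 / 2" "\<eta>test \<omega>1"] eta_pos
  have a: "\<eta>test \<omega>1 / 2 > 0" "?A' (\<eta>test \<omega>1 / 2) < c" by fastforce+
  obtain \<omega>2 where "\<omega>2 \<in> space P" "c \<le> ?A' (\<eta>test \<omega>2)"
    using P.exists_ge_integral[OF integral_T_Y(1)[OF T_int]] unfolding c_def .
  with mono[of "\<eta>test \<omega>2" "2 * \<eta>test \<omega>2"] eta_pos
  have b: "2 * \<eta>test \<omega>2 > 0" "c < ?A' (2 * \<eta>test \<omega>2)" by fastforce+
  have "\<eta>test \<omega>1 / 2 < 2 * \<eta>test \<omega>2"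
  proof (rule ccontr)
    assume "\<not> \<eta>test \<omega>1 / 2 < 2 * \<eta>test \<omega>2"
    then have "?A' (2 * \<eta>test \<omega>2) \<le> ?A' (\<eta>test \<omega>1 / 2)"
      using strict_mono_on_leD[OF deriv_A_strict_mono_on] pos_interior_param_space a(1) b(1) by simp
    with a(2) b(2) show False by linarith
  qed
  then obtain \<eta>s where above_a: "\<eta>test \<omega>1 / 2 < \<eta>s" and root: "?A' \<eta>s = c"
  proof (rule DERIV_intermediate_value[of _ _ "ef_A \<mu> h T" ?A'])
    fix x assume "x \<in> {\<eta>test \<omega>1 / 2 .. 2 * \<eta>test \<omega>2}"
    then have "x \<in> interior \<Theta>" using a(1) pos_interior_param_space by simp
    then show "(ef_A \<mu> h T has_real_derivative ?A' x) (at x)"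
      using A_has_real_derivative deriv_A by simp
  qed (use a b in auto)
  have "\<eta>s > 0" using a(1) above_a by linarith
  with root that show thesis unfolding c_def by blast
qed

end

theorem theorem5:
  fixes \<mu> :: "'a measure" and h T :: "'a \<Rightarrow> real"
    and P :: "'w measure" and \<eta>test :: "'w \<Rightarrow> real" and Y :: "'w \<Rightarrow> 'a"
  assumes h_meas: "h \<in> borel_measurable \<mu>" and h_nonneg: "\<And>x. x \<in> space \<mu> \<Longrightarrow> h x \<ge> 0"
    and T_meas: "T \<in> borel_measurable \<mu>"
    and minimal: "minimal_ef \<mu> h T"
    and param: "{0<..} \<subseteq> interior (natural_param_space \<mu> h T)"
    and P: "prob_space P"
    and eta_meas: "\<eta>test \<in> borel_measurable P"
    and eta_pos: "\<And>\<omega>. \<omega> \<in> space P \<Longrightarrow> \<eta>test \<omega> > 0"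
    and Y_meas: "Y \<in> measurable P \<mu>"
    and cond: "\<And>S B. S \<in> sets borel \<Longrightarrow> B \<in> sets \<mu> \<Longrightarrow>
        emeasure P {\<omega> \<in> space P. \<eta>test \<omega> \<in> S \<and> Y \<omega> \<in> B}
        = (\<integral>\<^sup>+\<omega>. indicator S (\<eta>test \<omega>) *
              emeasure (density \<mu> (\<lambda>x. ennreal (ef_density \<mu> h T (\<eta>test \<omega>) x))) B \<partial>P)"
    and T_int: "integrable P (\<lambda>\<omega>. T (Y \<omega>))"
    and logh_int: "integrable P (\<lambda>\<omega>. \<bar>ln (h (Y \<omega>))\<bar>)"
  shows "\<exists>\<eta>s>0.
           deriv (ef_A \<mu> h T) \<eta>s = (\<integral>\<omega>. deriv (ef_A \<mu> h T) (\<eta>test \<omega>) \<partial>P)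
         \<and> (\<forall>\<eta>>0. deriv (ef_A \<mu> h T) \<eta> = (\<integral>\<omega>. deriv (ef_A \<mu> h T) (\<eta>test \<omega>) \<partial>P) \<longrightarrow> \<eta> = \<eta>s)
         \<and> (\<forall>\<eta>>0. integrable P (\<lambda>\<omega>. log_loss (ef_density \<mu> h T \<eta>) (Y \<omega>)))
         \<and> (\<forall>\<eta>>0. \<eta> \<noteq> \<eta>s \<longrightarrow>
              (\<integral>\<omega>. log_loss (ef_density \<mu> h T \<eta>s) (Y \<omega>) \<partial>P)
              < (\<integral>\<omega>. log_loss (ef_density \<mu> h T \<eta>) (Y \<omega>) \<partial>P))"
proof -
  interpret exp_family_mixture \<mu> h T P \<eta>test Y
    by (intro exp_family_mixture.intro exp_family.intro exp_family_mixture_axioms.intro)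
      (fact assms)+
  obtain \<eta>s where \<eta>s: "\<eta>s > 0"
    and root: "deriv (ef_A \<mu> h T) \<eta>s = (\<integral>\<omega>. deriv (ef_A \<mu> h T) (\<eta>test \<omega>) \<partial>P)"
    using exists_deriv_A_eq_mean[OF T_int] .
  show ?thesis
  proof (intro exI[of _ \<eta>s] conjI allI impI \<eta>s root expected_log_loss(1)[OF T_int logh_int])
    fix \<eta> :: real
    assume "\<eta> > 0" "deriv (ef_A \<mu> h T) \<eta> = (\<integral>\<omega>. deriv (ef_A \<mu> h T) (\<eta>test \<omega>) \<partial>P)"
    with \<eta>s root show "\<eta> = \<eta>s"
      using deriv_A_inj[OF pos_interior_param_space pos_interior_param_space] by simp
  next
    fix \<eta> :: real assume "\<eta> > 0" "\<eta> \<noteq> \<eta>s"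
    with \<eta>s root show "(\<integral>\<omega>. log_loss (ef_density \<mu> h T \<eta>s) (Y \<omega>) \<partial>P)
        < (\<integral>\<omega>. log_loss (ef_density \<mu> h T \<eta>) (Y \<omega>) \<partial>P)"
      by (rule expected_log_loss_less[OF T_int logh_int])
  qed
qed

end
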